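(* Assume the Framework and the Purification Postulate. Let $\{\rho_i\}_{i\in X}$ be a preparation-test for system $\mathrm A$ (a test from $\mathrm I$ to $\mathrm A$), let $\rho:=\sum_{i\in X}\rho_i$, and let $\Psi\in\mathfrak S_1(\mathrm A\mathrm B)$ be any purification of $\rho$. Then there is an observation-test $\{b_i\}_{i\in X}$ on $\mathrm B$ (a test from $\mathrm B$ to $\mathrm I$) such that $\rho_i=(\mathcal I_{\mathrm A}\otimes b_i)\Psi$ for every $i\in X$. Moreover, the purifying system $\mathrm B$ and the purification $\Psi$ can be chosen such that the observation-test $\{b_i\}_{i\in X}$ with this property is discriminating, i.e. there are normalized states $\{\sigma_i\}_{i\in X}\subseteq\mathfrak S_1(\mathrm B)$ with $(b_j|\sigma_i)=\delta_{ij}$.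
   Context: Framework. We work in an operational-probabilistic theory: there is a collection of systems $\mathrm A,\mathrm B,\dots$, closed under a composition $\mathrm A\mathrm B$ (associative, symmetric up to a reversible swap, with a trivial system $\mathrm I$ satisfying $\mathrm A\mathrm I=\mathrm A$); for each pair of systems a set $\mathfrak T(\mathrm A,\mathrm B)$ of transformations; a test from $\mathrm A$ to $\mathrm B$ is a finite collection $\{\mathcal C_i\}_{i\in X}\subseteq\mathfrak T(\mathrm A,\mathrm B)$, and every transformation belongs to some test. Tests are closed under sequential composition, parallel composition ($\otimes$), coarse-graining (summing outcomes over the blocks of a partition of $X$) and conditioning (choosing the next test depending on the outcome of the previous one). States of $\mathrm A$ are the elements of $\mathfrak S(\mathrm A):=\mathfrak T(\mathrm I,\mathrm A)$, effects are the elements of $\mathfrak T(\mathrm A,\mathrm I)$, and transformations $\mathrm I\to\mathrm I$ are probabilities in $[0,1]$ (those of a test sum to $1$; composition is multiplication). An effect $a$ and a state $\rho$ give the probability $(a|\rho)$. States (effects) are identified when they give equal probabilities on all effects (states); transformations $\mathcal C,\mathcal C'$ are identified when $\mathcal C\otimes\mathcal I_{\mathrm S}$ and $\mathcal C'\otimes\mathcal I_{\mathrm S}$ act identically on all states of $\mathrm A\mathrm S$ for every system $\mathrm S$. States span a finite-dimensional real vector space $\mathfrak S_{\mathbb R}(\mathrm A)$, transformations act linearly, and $\mathfrak T_{\mathbb R}(\mathrm A,\mathrm B)$ is the real span of $\mathfrak T(\mathrm A,\mathrm B)$. Standing assumptions: (i) causality: each system $\mathrm A$ has a unique deterministic effect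 $e_{\mathrm A}$ (the effect forming a one-outcome observation test), and $e_{\mathrm A\mathrm B}=e_{\mathrm A}\otimes e_{\mathrm B}$; (ii) local discriminability: if two states of $\mathrm A\mathrm B$ differ, some product effect $a\otimes b$ gives them different probabilities; (iii) all sets of states are closed, the theory is not deterministic (hence all sets of states, effects and transformations are convex), and perfectly distinguishable states exist. A state $\rho$ is normalized if $(e|\rho)=1$; $\mathfrak S_1(\mathrm A)$ is the set of normalized states. A channel is a $\mathcal C\in\mathfrak T(\mathrm A,\mathrm B)$ with $e_{\mathrm B}\circ\mathcal C=e_{\mathrm A}$. A channel $\mathcal U\in\mathfrak T(\mathrm A,\mathrm B)$ is reversible if some channel $\mathcal W\in\mathfrak T(\mathrm B,\mathrm A)$ satisfies $\mathcal W\mathcal U=\mathcal I_{\mathrm A}$, $\mathcal U\mathcal W=\mathcal I_{\mathrm B}$; $\mathbf G_{\mathrm A}$ is the group of reversible channels on $\mathrm A$. The marginal of a state $\sigma$ of $\mathrm A\mathrm B$ on $\mathrm A$ is $(\mathcal I_{\mathrm A}\otimes e_{\mathrm B})\sigma$. Refinement. For $\mathcal C\in\mathfrak T(\mathrm A,\mathrm B)$, write $\mathcal D\prec\mathcal C$ if there are a test $\{\mathcal D_j\}_{j\in Y}$ and $Y_0\subseteq Y$ with $\mathcal C=\sum_{j\in Y_0}\mathcal D_j$ and $\mathcal D\in\{\mathcal D_j\}_{j\in Y_0}$; the refinement set is $D_{\mathcal C}=\{\mathcal D:\mathcal D\prec\mathcal C\}$. $\mathcal C$ is atomic if $\mathcal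 D\prec\mathcal C$ implies $\mathcal D=\lambda\mathcal C$ for some $\lambda\in[0,1]$. A pure state is an atomic state; a state is mixed otherwise. Purification Postulate. For every $\rho\in\mathfrak S_1(\mathrm A)$ there are a system $\mathrm B$ and a pure $\Psi\in\mathfrak S_1(\mathrm A\mathrm B)$ with $(\mathcal I_{\mathrm A}\otimes e_{\mathrm B})\Psi=\rho$ (a purification of $\rho$, with purifying system $\mathrm B$); and if $\Psi,\Psi'\in\mathfrak S_1(\mathrm A\mathrm B)$ are purifications of the same state, then $\Psi'=(\mathcal I_{\mathrm A}\otimes\mathcal U)\Psi$ for some $\mathcal U\in\mathbf G_{\mathrm B}$. *)

theory Defs
  imports "HOL-Analysis.Analysis"
begin

text \<open>
  Systems have type 's; transformations of all types live in one real
  vector space 't (the real span of transformations), with a typing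
  predicate o_T A B = the set of transformations from A to B.
  Tests from A to B are finite outcome-indexed families, represented as
  lists (outcome set = list positions); coarse-graining is sum, and tests
  are closed under reindexing (permutation).
  o_seq D C is the sequential composition "first C, then D" (D o C);
  o_par is the parallel composition; o_id A the identity of A.
  Probabilities (transformations I -> I) are identified with the scalar
  multiples p *R (o_id I), p in [0,1]; probability 1 is o_id I, 0 is 0.
\<close>

record ('s, 't) opt_struct =
  o_I :: 's
  o_comp :: "'s \<Rightarrow> 's \<Rightarrow> 's"
  o_T :: "'s \<Rightarrow> 's \<Rightarrow> 't set"
  o_tests :: "'s \<Rightarrow> 's \<Rightarrow> 't list set"
  o_seq :: "'t \<Rightarrow> 't \<Rightarrow> 't"
  o_par :: "'t \<Rightarrow> 't \<Rightarrow> 't"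
  o_id :: "'s \<Rightarrow> 't"

definition states :: "('s, 't) opt_struct \<Rightarrow> 's \<Rightarrow> 't set" where
  "states T0 A = o_T T0 (o_I T0) A"

definition effects :: "('s, 't) opt_struct \<Rightarrow> 's \<Rightarrow> 't set" where
  "effects T0 A = o_T T0 A (o_I T0)"

definition one :: "('s, 't) opt_struct \<Rightarrow> 't" where
  "one T0 = o_id T0 (o_I T0)"

definition eff :: "('s, 't) opt_struct \<Rightarrow> 's \<Rightarrow> 't" where
  "eff T0 A = (THE e. [e] \<in> o_tests T0 A (o_I T0))"

definition normalized_states :: "('s, 't) opt_struct \<Rightarrow> 's \<Rightarrow> 't set" where
  "normalized_states T0 A = {\<rho> \<in> states T0 A. o_seq T0 (eff T0 A) \<rho> = one T0}"

definition channel :: "('s, 't) opt_struct \<Rightarrow> 's \<Rightarrow> 's \<Rightarrow> 't \<Rightarrow> bool" where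
  "channel T0 A B C \<longleftrightarrow> C \<in> o_T T0 A B \<and> o_seq T0 (eff T0 B) C = eff T0 A"

definition reversible :: "('s, 't) opt_struct \<Rightarrow> 's \<Rightarrow> 's \<Rightarrow> 't \<Rightarrow> bool" where
  "reversible T0 A B U \<longleftrightarrow> channel T0 A B U \<and>
     (\<exists>W. channel T0 B A W \<and> o_seq T0 W U = o_id T0 A \<and> o_seq T0 U W = o_id T0 B)"

definition revgroup :: "('s, 't) opt_struct \<Rightarrow> 's \<Rightarrow> 't set" where
  "revgroup T0 A = {U. reversible T0 A A U}"

definition refines :: "('s, 't::comm_monoid_add) opt_struct \<Rightarrow> 's \<Rightarrow> 's \<Rightarrow> 't \<Rightarrow> 't \<Rightarrow> bool" where
  "refines T0 A B D C \<longleftrightarrow>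
     (\<exists>t \<in> o_tests T0 A B. \<exists>Y0 \<subseteq> {..<length t}.
        C = (\<Sum>j\<in>Y0. t ! j) \<and> (\<exists>j\<in>Y0. D = t ! j))"

definition atomic :: "('s, 't::real_vector) opt_struct \<Rightarrow> 's \<Rightarrow> 's \<Rightarrow> 't \<Rightarrow> bool" where
  "atomic T0 A B C \<longleftrightarrow> C \<in> o_T T0 A B \<and>
     (\<forall>D. refines T0 A B D C \<longrightarrow> (\<exists>l::real. 0 \<le> l \<and> l \<le> 1 \<and> D = l *\<^sub>R C))"

definition pure_state :: "('s, 't::real_vector) opt_struct \<Rightarrow> 's \<Rightarrow> 't \<Rightarrow> bool" where
  "pure_state T0 A \<rho> \<longleftrightarrow> atomic T0 (o_I T0) A \<rho>"

definition marginal :: "('s, 't) opt_struct \<Rightarrow> 's \<Rightarrow> 's \<Rightarrow> 't \<Rightarrow> 't" where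
  "marginal T0 A B \<sigma> = o_seq T0 (o_par T0 (o_id T0 A) (eff T0 B)) \<sigma>"

definition purification :: "('s, 't::real_vector) opt_struct \<Rightarrow> 's \<Rightarrow> 's \<Rightarrow> 't \<Rightarrow> 't \<Rightarrow> bool" where
  "purification T0 A B \<rho> \<Psi> \<longleftrightarrow>
     \<Psi> \<in> normalized_states T0 (o_comp T0 A B) \<and> pure_state T0 (o_comp T0 A B) \<Psi> \<and>
     marginal T0 A B \<Psi> = \<rho>"

locale opt =
  fixes T0 :: "('s, 't::real_normed_vector) opt_struct"
  assumes comp_assoc: "o_comp T0 (o_comp T0 A B) C = o_comp T0 A (o_comp T0 B C)"
    and comp_unit_right: "o_comp T0 A (o_I T0) = A"
    and comp_unit_left: "o_comp T0 (o_I T0) A = A"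
    and seq_bilinear: "bilinear (o_seq T0)"
    and par_bilinear: "bilinear (o_par T0)"
    and seq_T: "\<lbrakk>x \<in> o_T T0 A B; y \<in> o_T T0 B C\<rbrakk> \<Longrightarrow> o_seq T0 y x \<in> o_T T0 A C"
    and par_T: "\<lbrakk>x \<in> o_T T0 A B; y \<in> o_T T0 A' B'\<rbrakk>
                 \<Longrightarrow> o_par T0 x y \<in> o_T T0 (o_comp T0 A A') (o_comp T0 B B')"
    and seq_assoc: "o_seq T0 z (o_seq T0 y x) = o_seq T0 (o_seq T0 z y) x"
    and par_assoc: "o_par T0 (o_par T0 x y) z = o_par T0 x (o_par T0 y z)"
    and id_T: "o_id T0 A \<in> o_T T0 A A"
    and id_test: "[o_id T0 A] \<in> o_tests T0 A A"
    and seq_id_left: "x \<in> o_T T0 A B \<Longrightarrow> o_seq T0 (o_id T0 B) x = x"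
    and seq_id_right: "x \<in> o_T T0 A B \<Longrightarrow> o_seq T0 x (o_id T0 A) = x"
    and par_id: "o_par T0 (o_id T0 A) (o_id T0 B) = o_id T0 (o_comp T0 A B)"
    and par_unit_right: "o_par T0 x (o_id T0 (o_I T0)) = x"
    and par_unit_left: "o_par T0 (o_id T0 (o_I T0)) x = x"
    and interchange: "\<lbrakk>x \<in> o_T T0 A B; y \<in> o_T T0 B C; x' \<in> o_T T0 A' B'; y' \<in> o_T T0 B' C'\<rbrakk>
        \<Longrightarrow> o_seq T0 (o_par T0 y y') (o_par T0 x x') = o_par T0 (o_seq T0 y x) (o_seq T0 y' x')"
    and swap: "\<exists>sw. \<forall>A B. reversible T0 (o_comp T0 A B) (o_comp T0 B A) (sw A B) \<and>
        (\<forall>C D x y. x \<in> o_T T0 A C \<longrightarrow> y \<in> o_T T0 B D \<longrightarrow>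
           o_seq T0 (sw C D) (o_par T0 x y) = o_seq T0 (o_par T0 y x) (sw A B))"
    and tests_T: "t \<in> o_tests T0 A B \<Longrightarrow> set t \<subseteq> o_T T0 A B"
    and T_in_test: "x \<in> o_T T0 A B \<Longrightarrow> \<exists>t \<in> o_tests T0 A B. x \<in> set t"
    and tests_perm: "\<lbrakk>t \<in> o_tests T0 A B; mset t' = mset t\<rbrakk> \<Longrightarrow> t' \<in> o_tests T0 A B"
    and tests_coarse: "x # y # t \<in> o_tests T0 A B \<Longrightarrow> (x + y) # t \<in> o_tests T0 A B"
    and tests_cond: "\<lbrakk>t \<in> o_tests T0 A B; \<forall>i < length t. u i \<in> o_tests T0 B C\<rbrakk>
        \<Longrightarrow> concat (map (\<lambda>i. map (\<lambda>y. o_seq T0 y (t ! i)) (u i)) [0..<length t]) \<in> o_tests T0 A C"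
    and tests_par: "\<lbrakk>t \<in> o_tests T0 A B; t' \<in> o_tests T0 A' B'\<rbrakk>
        \<Longrightarrow> concat (map (\<lambda>x. map (\<lambda>y. o_par T0 x y) t') t) \<in> o_tests T0 (o_comp T0 A A') (o_comp T0 B B')"
    and scalars: "o_T T0 (o_I T0) (o_I T0) \<subseteq> {p *\<^sub>R one T0 | p. 0 \<le> p \<and> p \<le> 1}"
    and test_prob: "t \<in> o_tests T0 (o_I T0) (o_I T0) \<Longrightarrow> sum_list t = one T0"
    and state_ext: "\<lbrakk>\<rho> \<in> states T0 A; \<rho>' \<in> states T0 A;
        \<forall>a \<in> effects T0 A. o_seq T0 a \<rho> = o_seq T0 a \<rho>'\<rbrakk> \<Longrightarrow> \<rho> = \<rho>'"
    and effect_ext: "\<lbrakk>a \<in> effects T0 A; a' \<in> effects T0 A;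
        \<forall>\<rho> \<in> states T0 A. o_seq T0 a \<rho> = o_seq T0 a' \<rho>\<rbrakk> \<Longrightarrow> a = a'"
    and trans_ext: "\<lbrakk>x \<in> o_T T0 A B; y \<in> o_T T0 A B;
        \<forall>S. \<forall>\<rho> \<in> states T0 (o_comp T0 A S).
           o_seq T0 (o_par T0 x (o_id T0 S)) \<rho> = o_seq T0 (o_par T0 y (o_id T0 S)) \<rho>\<rbrakk> \<Longrightarrow> x = y"
    and fin_dim: "\<exists>F. finite F \<and> states T0 A \<subseteq> span F"
    and causal: "\<exists>!e. [e] \<in> o_tests T0 A (o_I T0)"
    and causal_par: "eff T0 (o_comp T0 A B) = o_par T0 (eff T0 A) (eff T0 B)"
    and local_discr: "\<lbrakk>\<rho> \<in> states T0 (o_comp T0 A B); \<rho>' \<in> states T0 (o_comp T0 A B); \<rho> \<noteq> \<rho>'\<rbrakk>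
        \<Longrightarrow> \<exists>a \<in> effects T0 A. \<exists>b \<in> effects T0 B.
              o_seq T0 (o_par T0 a b) \<rho> \<noteq> o_seq T0 (o_par T0 a b) \<rho>'"
    and closed_states: "closed (states T0 A)"
    and nondet: "\<exists>x \<in> o_T T0 (o_I T0) (o_I T0). x \<noteq> 0 \<and> x \<noteq> one T0"
    and convex_T: "convex (o_T T0 A B)"
    and distinguishable: "\<exists>A \<rho>0 \<rho>1 a0 a1. \<rho>0 \<in> normalized_states T0 A \<and> \<rho>1 \<in> normalized_states T0 A \<and>
        [a0, a1] \<in> o_tests T0 A (o_I T0) \<and>
        o_seq T0 a0 \<rho>0 = one T0 \<and> o_seq T0 a1 \<rho>1 = one T0 \<and> o_seq T0 a0 \<rho>1 = 0 \<and> o_seq T0 a1 \<rho>0 = 0"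

locale opt_purif = opt +
  assumes purif_exists: "\<rho> \<in> normalized_states T0 A \<Longrightarrow> \<exists>B \<Psi>. purification T0 A B \<rho> \<Psi>"
    and purif_unique: "\<lbrakk>purification T0 A B \<rho> \<Psi>; purification T0 A B \<rho> \<Psi>'\<rbrakk>
        \<Longrightarrow> \<exists>U \<in> revgroup T0 B. \<Psi>' = o_seq T0 (o_par T0 (o_id T0 A) U) \<Psi>"

end

theory Submission
  imports Defs
begin

text \<open>
  Let \<open>\<rho>s = [\<rho>\<^sub>0, ..., \<rho>\<^sub>n\<^sub>-\<^sub>1]\<close> and \<open>\<rho> = \<Sum> \<rho>\<^sub>i\<close>.  Using the perfectly
  distinguishable states postulated by the framework we build, by induction on n,
  normalized states \<open>\<alpha>\<^sub>i\<close> of a system C together with an observation test \<open>t\<close>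
  with \<open>(t\<^sub>j|\<alpha>\<^sub>i) = \<delta>\<^sub>i\<^sub>j\<close>.  The ensemble state \<open>\<Sigma> = \<Sum> \<rho>\<^sub>i \<otimes> \<alpha>\<^sub>i\<close> of AC
  (a coarse-graining of a conditional test) has marginal \<open>\<rho>\<close>, and any purification
  \<open>\<Gamma>\<close> of \<open>\<Sigma>\<close> is a purification of \<open>\<rho>\<close> on which the test \<open>t\<^sub>j \<otimes> e\<close> induces
  \<open>\<rho>\<^sub>j\<close> and discriminates the states \<open>\<alpha>\<^sub>i \<otimes> \<delta>\<close>: this is the second claim.
  For the first claim, an arbitrary purification \<open>\<Psi>\<close> of \<open>\<rho>\<close> is transported onto
  \<open>\<Gamma> \<otimes> \<eta>\<close> by a channel on the purifying system (uniqueness of purification,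
  applied to \<open>\<Psi> \<otimes> \<Gamma>\<close> with its purifying systems swapped and to \<open>\<Gamma> \<otimes> \<eta>\<close>, where
  \<open>\<eta>\<close> is \<open>\<Psi>\<close> with its two factors swapped; all are pure by the lemmas on products
  and reversible images of pure states), and observation tests can be pulled back
  along channels.
\<close>

context opt
begin

abbreviation seq where "seq \<equiv> o_seq T0"
abbreviation par where "par \<equiv> o_par T0"
abbreviation ident where "ident \<equiv> o_id T0"
abbreviation joint where "joint \<equiv> o_comp T0"
abbreviation \<I> where "\<I> \<equiv> o_I T0"
abbreviation Trans where "Trans \<equiv> o_T T0"
abbreviation tests where "tests \<equiv> o_tests T0"

declare comp_assoc[simp] comp_unit_right[simp] comp_unit_left[simp]

lemma seq_ladd: "seq (x + y) z = seq x z + seq y z" using seq_bilinear bilinear_ladd by metis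
lemma seq_radd: "seq z (x + y) = seq z x + seq z y" using seq_bilinear bilinear_radd by metis
lemma seq_rmul: "seq z (c *\<^sub>R x) = c *\<^sub>R seq z x" using seq_bilinear bilinear_rmul by metis
lemma seq_lzero: "seq 0 z = 0" using seq_bilinear bilinear_lzero by metis
lemma seq_rzero: "seq z 0 = 0" using seq_bilinear bilinear_rzero by metis
lemma par_ladd: "par (x + y) z = par x z + par y z" using par_bilinear bilinear_ladd by metis
lemma par_radd: "par z (x + y) = par z x + par z y" using par_bilinear bilinear_radd by metis
lemma par_rmul: "par z (c *\<^sub>R x) = c *\<^sub>R par z x" using par_bilinear bilinear_rmul by metis
lemma par_lzero: "par 0 z = 0" using par_bilinear bilinear_lzero by metis
lemma par_rzero: "par z 0 = 0" using par_bilinear bilinear_rzero by metis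

lemma seq_lsum: "seq (sum_list xs) z = sum_list (map (\<lambda>x. seq x z) xs)"
  by (induction xs) (auto simp: seq_ladd seq_lzero)
lemma seq_rsum: "seq z (sum_list xs) = sum_list (map (\<lambda>x. seq z x) xs)"
  by (induction xs) (auto simp: seq_radd seq_rzero)
lemma par_lsum: "par (sum_list xs) z = sum_list (map (\<lambda>x. par x z) xs)"
  by (induction xs) (auto simp: par_ladd par_lzero)
lemma par_rsum: "par z (sum_list xs) = sum_list (map (\<lambda>x. par z x) xs)"
  by (induction xs) (auto simp: par_radd par_rzero)

lemma eff_test: "[eff T0 A] \<in> tests A \<I>"
  unfolding eff_def using causal theI' by metis

lemma eff_unique: "[e] \<in> tests A \<I> \<Longrightarrow> eff T0 A = e"
  using eff_test causal by metis

lemma eff_T: "eff T0 A \<in> Trans A \<I>"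
  using tests_T eff_test by fastforce

lemma one_T: "one T0 \<in> Trans \<I> \<I>"
  unfolding one_def using id_T by simp

lemma one_nonzero: "one T0 \<noteq> 0"
proof
  assume "one T0 = 0"
  from nondet obtain x where "x \<in> Trans \<I> \<I>" "x \<noteq> 0" by blast
  with scalars \<open>one T0 = 0\<close> show False by auto
qed

lemma seq_one_left: "x \<in> Trans A \<I> \<Longrightarrow> seq (one T0) x = x"
  unfolding one_def using seq_id_left by blast
lemma seq_one_right: "x \<in> Trans \<I> A \<Longrightarrow> seq x (one T0) = x"
  unfolding one_def using seq_id_right by blast
lemma par_one_left: "par (one T0) x = x"
  unfolding one_def using par_unit_left by blast
lemma par_one_right: "par x (one T0) = x"
  unfolding one_def using par_unit_right by blast

lemma normalized_statesD:
  "x \<in> normalized_states T0 A \<Longrightarrow> x \<in> Trans \<I> A \<and> seq (eff T0 A) x = one T0"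
  unfolding normalized_states_def states_def by auto

lemma coarse_grain_prefix: "x # xs @ ys \<in> tests A B \<Longrightarrow> (x + sum_list xs) # ys \<in> tests A B"
proof (induction xs arbitrary: x)
  case (Cons y zs)
  then have "(x + y) # zs @ ys \<in> tests A B" using tests_coarse by simp
  from Cons.IH[OF this] show ?case by (simp add: add.assoc)
qed simp

lemma sum_prefix_test: "xs \<noteq> [] \<Longrightarrow> xs @ ys \<in> tests A B \<Longrightarrow> sum_list xs # ys \<in> tests A B"
  by (cases xs) (auto dest: coarse_grain_prefix)

lemma sum_prefix_T: "xs \<noteq> [] \<Longrightarrow> xs @ ys \<in> tests A B \<Longrightarrow> sum_list xs \<in> Trans A B"
  using sum_prefix_test tests_T by fastforce

lemma observation_test_sum:
  assumes "t \<in> tests A \<I>" "t \<noteq> []" shows "sum_list t = eff T0 A"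
  using sum_prefix_test[of t "[]"] assms eff_unique by (metis append_Nil2)

text \<open>Preparation tests are never empty: an empty test from \<open>\<I>\<close> would give an empty
  test of probabilities, whose sum is 0 rather than 1.\<close>

lemma preparation_test_nonempty: "t \<in> tests \<I> B \<Longrightarrow> t \<noteq> []"
proof
  assume "t \<in> tests \<I> B" "t = []"
  then have "[] \<in> tests \<I> \<I>" using tests_cond[of "[]" \<I> B "\<lambda>_. []" \<I>] by simp
  then show False using test_prob one_nonzero by fastforce
qed

lemma test_starting_with: "x \<in> Trans A B \<Longrightarrow> \<exists>r. x # r \<in> tests A B"
proof -
  assume "x \<in> Trans A B"
  then obtain t where t: "t \<in> tests A B" "x \<in> set t" using T_in_test by blast
  then have "mset (x # remove1 x t) = mset t" by simp
  then show ?thesis using tests_perm[OF t(1)] by blast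
qed

lemma mset_concat_map_append:
  "mset (concat (map (\<lambda>x. map (F x) (fs @ rs)) L)) =
   mset (concat (map (\<lambda>x. map (F x) fs) L) @ concat (map (\<lambda>x. map (F x) rs) L))"
  by (induction L) auto

lemma mset_concat_map_Cons:
  "mset (concat (map (\<lambda>i. map (G i) (y i # r i)) L)) =
   mset (map (\<lambda>i. G i (y i)) L @ concat (map (\<lambda>i. map (G i) (r i)) L))"
  by (induction L) auto

lemma conditioned_choice:
  assumes "t \<in> tests A B" "\<And>i. i < length t \<Longrightarrow> y i # r i \<in> tests B C"
  shows "\<exists>zs. map (\<lambda>i. seq (y i) (t!i)) [0..<length t] @ zs \<in> tests A C"
proof -
  have "concat (map (\<lambda>i. map (\<lambda>f. seq f (t!i)) (y i # r i)) [0..<length t]) \<in> tests A C"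
    using tests_cond[OF assms(1), of "\<lambda>i. y i # r i"] assms(2) by blast
  from tests_perm[OF this mset_concat_map_Cons[symmetric]] show ?thesis by blast
qed

lemma sequential_part:
  assumes "xs @ ys \<in> tests A B" "fs @ rs \<in> tests B C"
  shows "\<exists>zs. concat (map (\<lambda>x. map (\<lambda>f. seq f x) fs) xs) @ zs \<in> tests A C"
proof -
  let ?F = "\<lambda>x f. seq f x"
  have "concat (map (\<lambda>i. map (\<lambda>f. seq f ((xs @ ys)!i)) (fs @ rs)) [0..<length (xs @ ys)]) \<in> tests A C"
    using tests_cond[OF assms(1), of "\<lambda>_. fs @ rs"] assms(2) by blast
  also have "map (\<lambda>i. map (\<lambda>f. seq f ((xs @ ys)!i)) (fs @ rs)) [0..<length (xs @ ys)] =
             map (\<lambda>x. map (?F x) (fs @ rs)) (xs @ ys)"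
    by (rule nth_equalityI) (simp_all del: map_append)
  finally have T: "concat (map (\<lambda>x. map (?F x) (fs @ rs)) (xs @ ys)) \<in> tests A C" .
  have "mset (concat (map (\<lambda>x. map (?F x) (fs @ rs)) (xs @ ys))) =
        mset (concat (map (\<lambda>x. map (?F x) fs) xs) @
           (concat (map (\<lambda>x. map (?F x) rs) xs) @ concat (map (\<lambda>x. map (?F x) (fs @ rs)) ys)))"
    using mset_concat_map_append[of ?F fs rs xs] by simp
  from tests_perm[OF T this[symmetric]] show ?thesis by blast
qed

lemma sum_sequential_part:
  "sum_list (concat (map (\<lambda>x. map (\<lambda>f. seq f x) fs) xs)) = seq (sum_list fs) (sum_list xs)"
  by (induction xs) (auto simp: seq_lsum seq_radd seq_rzero)

lemma refines_iff:
  "refines T0 A B D C \<longleftrightarrow> (\<exists>xs ys. xs @ ys \<in> tests A B \<and> C = sum_list xs \<and> D \<in> set xs)"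
proof
  assume "refines T0 A B D C"
  then obtain t Y0 j where t: "t \<in> tests A B" "Y0 \<subseteq> {..<length t}" "C = (\<Sum>j\<in>Y0. t ! j)"
    "j \<in> Y0" "D = t ! j" unfolding refines_def by blast
  define L where "L = [0..<length t]"
  define xs where "xs = map (nth t) (filter (\<lambda>j. j \<in> Y0) L)"
  define ys where "ys = map (nth t) (filter (\<lambda>j. j \<notin> Y0) L)"
  have "mset (xs @ ys) = image_mset (nth t) (mset (filter (\<lambda>j. j \<in> Y0) L) + mset (filter (\<lambda>j. j \<notin> Y0) L))"
    unfolding xs_def ys_def by (simp del: mset_filter)
  also have "\<dots> = image_mset (nth t) (mset L)"
    by (simp only: mset_filter multiset_partition[symmetric])
  also have "\<dots> = mset t" unfolding L_def by (metis map_nth mset_map)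
  finally have "xs @ ys \<in> tests A B" using tests_perm t(1) by metis
  moreover have "set (filter (\<lambda>j. j \<in> Y0) L) = Y0" using t(2) unfolding L_def by auto
  then have "C = sum_list xs" unfolding xs_def t(3)
    by (metis distinct_filter distinct_upt L_def sum_list_distinct_conv_sum_set)
  moreover have "D \<in> set xs" using t unfolding xs_def L_def by auto
  ultimately show "\<exists>xs ys. xs @ ys \<in> tests A B \<and> C = sum_list xs \<and> D \<in> set xs" by blast
next
  assume "\<exists>xs ys. xs @ ys \<in> tests A B \<and> C = sum_list xs \<and> D \<in> set xs"
  then obtain xs ys where h: "xs @ ys \<in> tests A B" "C = sum_list xs" "D \<in> set xs" by blast
  then obtain j where j: "j < length xs" "D = xs ! j" by (metis in_set_conv_nth)
  have "C = (\<Sum>i\<in>{..<length xs}. (xs @ ys) ! i)"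
    using h(2) by (simp add: sum_list_sum_nth nth_append atLeast0LessThan)
  then show "refines T0 A B D C" unfolding refines_def
    using h(1) j by (intro bexI[of _ "xs @ ys"] exI[of _ "{..<length xs}"]) (auto simp: nth_append)
qed

lemma refines_seq:
  assumes "refines T0 A B D C" "fs @ rs \<in> tests B C'" "f \<in> set fs"
  shows "refines T0 A C' (seq f D) (seq (sum_list fs) C)"
proof -
  obtain xs ys where R: "xs @ ys \<in> tests A B" "C = sum_list xs" "D \<in> set xs"
    using assms(1) unfolding refines_iff by blast
  obtain zs where "concat (map (\<lambda>x. map (\<lambda>g. seq g x) fs) xs) @ zs \<in> tests A C'"
    using sequential_part[OF R(1) assms(2)] by blast
  moreover have "seq f D \<in> set (concat (map (\<lambda>x. map (\<lambda>g. seq g x) fs) xs))"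
    using R(3) assms(3) by auto
  ultimately show ?thesis unfolding refines_iff R(2) sum_sequential_part[symmetric] by blast
qed

lemma pure_stateD:
  "pure_state T0 A \<rho> \<Longrightarrow> refines T0 \<I> A D \<rho> \<Longrightarrow> \<exists>l. 0 \<le> l \<and> l \<le> 1 \<and> D = l *\<^sub>R \<rho>"
  unfolding pure_state_def atomic_def by blast

lemma par_T_joint: "x \<in> Trans A B \<Longrightarrow> y \<in> Trans A' B' \<Longrightarrow> A2 = joint A A' \<Longrightarrow> B2 = joint B B' \<Longrightarrow> par x y \<in> Trans A2 B2"
  using par_T by blast

lemma par_state_as_seq: "x \<in> Trans \<I> A \<Longrightarrow> y \<in> Trans \<I> B \<Longrightarrow> seq (par (ident A) y) x = par x y"
  using interchange[of x \<I> A "ident A" A "one T0" \<I> \<I> y B] id_T one_T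
  by (simp add: par_one_right seq_id_left seq_one_right)

lemma par_ident_seq:
  "x \<in> Trans A1 A2 \<Longrightarrow> y \<in> Trans A2 A3 \<Longrightarrow> par (ident C) (seq y x) = seq (par (ident C) y) (par (ident C) x)"
  using interchange[of "ident C" C C "ident C" C x A1 A2 y A3] id_T seq_id_left[OF id_T, of C] by simp

lemma par_effect_left: "a \<in> Trans S1 \<I> \<Longrightarrow> b \<in> Trans S2 \<I> \<Longrightarrow> seq a (par (ident S1) b) = par a b"
  using interchange[of "ident S1" S1 S1 a \<I> b S2 \<I> "one T0" \<I>] id_T one_T
  by (simp add: par_one_right seq_id_right seq_one_left)

lemma par_effect_right: "a \<in> Trans S1 \<I> \<Longrightarrow> b \<in> Trans S2 \<I> \<Longrightarrow> seq b (par a (ident S2)) = par a b"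
  using interchange[of a S1 \<I> "one T0" \<I> "ident S2" S2 S2 b \<I>] id_T one_T
  by (simp add: par_one_left seq_id_right seq_one_left)

lemma par_effects_split: "f \<in> Trans C \<I> \<Longrightarrow> g \<in> Trans D \<I> \<Longrightarrow>
   par (ident A) (par f g) = seq (par (ident A) f) (par (ident (joint A C)) g)"
proof -
  assume f: "f \<in> Trans C \<I>" and g: "g \<in> Trans D \<I>"
  have y: "par (ident A) f \<in> Trans (joint A C) A" using par_T_joint[OF id_T f] by simp
  have "seq (par (par (ident A) f) (one T0)) (par (ident (joint A C)) g) =
        par (seq (par (ident A) f) (ident (joint A C))) (seq (one T0) g)"
    using interchange[OF id_T y g one_T] .
  then show ?thesis using y g by (simp add: par_one_right seq_id_right seq_one_left par_assoc)
qed

lemma tests_par_ident_left: "t \<in> tests A B \<Longrightarrow> map (par (ident C)) t \<in> tests (joint C A) (joint C B)"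
  using tests_par[OF id_test, of t A B] by simp

lemma tests_par_eff_right: "t \<in> tests A B \<Longrightarrow> map (\<lambda>x. par x (eff T0 C)) t \<in> tests (joint A C) B"
  using tests_par[of t A B "[eff T0 C]" C \<I>] eff_test by (simp add: map_concat comp_def)

lemma product_normalized:
  assumes "x \<in> normalized_states T0 S1" "y \<in> normalized_states T0 S2"
  shows "par x y \<in> normalized_states T0 (joint S1 S2)"
  using assms unfolding normalized_states_def states_def
  by (auto simp: causal_par interchange[OF _ eff_T _ eff_T] par_one_left intro: par_T_joint)

text \<open>The marginals of a refinement D of a product of normalized pure states
  are proportional to the factors: \<open>(e \<otimes> I)D = \<mu>\<Gamma>\<close> and \<open>(I \<otimes> b)D = l\<Psi>\<close>,
  since they refine \<open>\<Gamma>\<close> and \<open>\<Psi>\<close> respectively.\<close>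

lemma product_refinement_marginals:
  assumes N1: "\<Psi> \<in> normalized_states T0 S1" and P1: "pure_state T0 S1 \<Psi>"
    and N2: "\<Gamma> \<in> normalized_states T0 S2" and P2: "pure_state T0 S2 \<Gamma>"
    and D: "refines T0 \<I> (joint S1 S2) D (par \<Psi> \<Gamma>)"
  shows "\<exists>\<mu>. 0 \<le> \<mu> \<and> \<mu> \<le> 1 \<and> seq (par (eff T0 S1) (ident S2)) D = \<mu> *\<^sub>R \<Gamma>"
    and "b \<in> Trans S2 \<I> \<Longrightarrow> \<exists>l. seq (par (ident S1) b) D = l *\<^sub>R \<Psi>"
proof -
  have Ps: "\<Psi> \<in> Trans \<I> S1" "seq (eff T0 S1) \<Psi> = one T0" using normalized_statesD[OF N1] by auto
  have Gs: "\<Gamma> \<in> Trans \<I> S2" "seq (eff T0 S2) \<Gamma> = one T0" using normalized_statesD[OF N2] by auto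
  have "[par (eff T0 S1) (ident S2)] @ [] \<in> tests (joint S1 S2) S2"
    using tests_par[OF eff_test[of S1] id_test[of S2]] by simp
  from refines_seq[OF D this] have "refines T0 \<I> S2 (seq (par (eff T0 S1) (ident S2)) D)
      (seq (par (eff T0 S1) (ident S2)) (par \<Psi> \<Gamma>))" by simp
  moreover have "seq (par (eff T0 S1) (ident S2)) (par \<Psi> \<Gamma>) = \<Gamma>"
    using interchange[OF Ps(1) eff_T Gs(1) id_T] Ps Gs by (simp add: par_one_left seq_id_left)
  ultimately show "\<exists>\<mu>. 0 \<le> \<mu> \<and> \<mu> \<le> 1 \<and> seq (par (eff T0 S1) (ident S2)) D = \<mu> *\<^sub>R \<Gamma>"
    using pure_stateD[OF P2] by metis
  assume b: "b \<in> Trans S2 \<I>"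
  then obtain r where r: "b # r \<in> tests S2 \<I>" using test_starting_with by blast
  have "map (par (ident S1)) (b # r) @ [] \<in> tests (joint S1 S2) S1"
    using tests_par_ident_left[OF r, of S1] by simp
  from refines_seq[OF D this] have "refines T0 \<I> S1 (seq (par (ident S1) b) D)
      (seq (sum_list (map (par (ident S1)) (b # r))) (par \<Psi> \<Gamma>))" by simp
  moreover have "sum_list (b # r) = eff T0 S2" using observation_test_sum[OF r] by simp
  then have "sum_list (map (par (ident S1)) (b # r)) = par (ident S1) (eff T0 S2)"
    by (simp only: par_rsum[symmetric])
  moreover have "seq (par (ident S1) (eff T0 S2)) (par \<Psi> \<Gamma>) = \<Psi>"
    using interchange[OF Ps(1) id_T Gs(1) eff_T] Ps Gs by (simp add: par_one_right seq_id_left)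
  ultimately show "\<exists>l. seq (par (ident S1) b) D = l *\<^sub>R \<Psi>"
    using pure_stateD[OF P1] by metis
qed

text \<open>The product of normalized pure states is pure.  By local discriminability it
  suffices that a refinement D agrees with \<open>\<Psi> \<otimes> \<mu>\<Gamma>\<close> on all product effects.\<close>

lemma product_pure:
  assumes N1: "\<Psi> \<in> normalized_states T0 S1" and P1: "pure_state T0 S1 \<Psi>"
    and N2: "\<Gamma> \<in> normalized_states T0 S2" and P2: "pure_state T0 S2 \<Gamma>"
  shows "pure_state T0 (joint S1 S2) (par \<Psi> \<Gamma>)"
  unfolding pure_state_def atomic_def
proof (intro conjI allI impI)
  have Ps: "\<Psi> \<in> Trans \<I> S1" "seq (eff T0 S1) \<Psi> = one T0" using normalized_statesD[OF N1] by auto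
  have Gs: "\<Gamma> \<in> Trans \<I> S2" "seq (eff T0 S2) \<Gamma> = one T0" using normalized_statesD[OF N2] by auto
  show "par \<Psi> \<Gamma> \<in> Trans \<I> (joint S1 S2)" using par_T_joint[OF Ps(1) Gs(1)] by simp
  fix D assume D: "refines T0 \<I> (joint S1 S2) D (par \<Psi> \<Gamma>)"
  then obtain xs ys where "xs @ ys \<in> tests \<I> (joint S1 S2)" "D \<in> set xs"
    unfolding refines_iff by blast
  then have DT: "D \<in> Trans \<I> (joint S1 S2)" using tests_T by fastforce
  obtain \<mu> where mu: "0 \<le> \<mu>" "\<mu> \<le> 1" "seq (par (eff T0 S1) (ident S2)) D = \<mu> *\<^sub>R \<Gamma>"
    using product_refinement_marginals(1)[OF N1 P1 N2 P2 D] by blast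
  have on_products: "seq (par a b) D = seq (par a b) (par \<Psi> (\<mu> *\<^sub>R \<Gamma>))"
    if a: "a \<in> Trans S1 \<I>" and b: "b \<in> Trans S2 \<I>" for a b
  proof -
    obtain l where l: "seq (par (ident S1) b) D = l *\<^sub>R \<Psi>"
      using product_refinement_marginals(2)[OF N1 P1 N2 P2 D b] by blast
    obtain p where p: "seq a \<Psi> = p *\<^sub>R one T0" using scalars seq_T[OF Ps(1) a] by blast
    have "l *\<^sub>R one T0 = seq (eff T0 S1) (seq (par (ident S1) b) D)" using l Ps by (simp add: seq_rmul)
    also have "\<dots> = seq b (seq (par (eff T0 S1) (ident S2)) D)"
      using par_effect_left[OF eff_T b] par_effect_right[OF eff_T b] by (simp add: seq_assoc)
    also have "\<dots> = \<mu> *\<^sub>R seq b \<Gamma>" using mu(3) by (simp add: seq_rmul)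
    finally have lm: "l *\<^sub>R one T0 = \<mu> *\<^sub>R seq b \<Gamma>" .
    have "seq (par a b) D = seq a (seq (par (ident S1) b) D)"
      using par_effect_left[OF a b] by (simp add: seq_assoc)
    also have "\<dots> = l *\<^sub>R (p *\<^sub>R one T0)" using l p by (simp add: seq_rmul)
    also have "\<dots> = p *\<^sub>R \<mu> *\<^sub>R seq b \<Gamma>" using lm by (metis scaleR_left_commute)
    also have "\<dots> = seq (par a b) (par \<Psi> (\<mu> *\<^sub>R \<Gamma>))"
      using interchange[OF Ps(1) a Gs(1) b] p
      by (simp add: par_rmul seq_rmul par_one_left par_bilinear bilinear_lmul)
    finally show ?thesis .
  qed
  have "par (eff T0 S1) (ident S2) \<in> Trans (joint S1 S2) S2" using par_T_joint[OF eff_T id_T] by simp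
  then have "\<mu> *\<^sub>R \<Gamma> \<in> Trans \<I> S2" using seq_T[OF DT] mu(3) by metis
  then have "par \<Psi> (\<mu> *\<^sub>R \<Gamma>) \<in> Trans \<I> (joint S1 S2)" using par_T_joint[OF Ps(1)] by simp
  then have "D = par \<Psi> (\<mu> *\<^sub>R \<Gamma>)"
    using local_discr[of D S1 S2 "par \<Psi> (\<mu> *\<^sub>R \<Gamma>)"] DT on_products
    unfolding states_def effects_def by blast
  then show "\<exists>l. 0 \<le> l \<and> l \<le> 1 \<and> D = l *\<^sub>R par \<Psi> \<Gamma>" using mu by (auto simp: par_rmul)
qed

text \<open>Reversible channels map normalized pure states to normalized pure states:
  a refinement of \<open>V\<rho>\<close> is carried by the inverse W to a refinement of \<open>\<rho>\<close>.\<close>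

lemma reversible_image_pure:
  assumes N: "\<rho> \<in> normalized_states T0 R" and P: "pure_state T0 R \<rho>"
    and V: "reversible T0 R R' V"
  shows "seq V \<rho> \<in> normalized_states T0 R'" "pure_state T0 R' (seq V \<rho>)"
proof -
  obtain W where VT: "V \<in> Trans R R'" "seq (eff T0 R') V = eff T0 R" and WT: "W \<in> Trans R' R"
    and WV: "seq W V = ident R" "seq V W = ident R'"
    using V unfolding reversible_def channel_def by blast
  have \<rho>: "\<rho> \<in> Trans \<I> R" "seq (eff T0 R) \<rho> = one T0" using normalized_statesD[OF N] by auto
  have QT: "seq V \<rho> \<in> Trans \<I> R'" using seq_T[OF \<rho>(1) VT(1)] .
  show "seq V \<rho> \<in> normalized_states T0 R'"
    unfolding normalized_states_def states_def using QT VT(2) \<rho>(2) by (simp add: seq_assoc)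
  show "pure_state T0 R' (seq V \<rho>)" unfolding pure_state_def atomic_def
  proof (intro conjI allI impI QT)
    fix D assume D: "refines T0 \<I> R' D (seq V \<rho>)"
    then obtain xs ys where "xs @ ys \<in> tests \<I> R'" "D \<in> set xs" unfolding refines_iff by blast
    then have DT: "D \<in> Trans \<I> R'" using tests_T by fastforce
    obtain r where "W # r \<in> tests R' R" using test_starting_with[OF WT] by blast
    from refines_seq[OF D, of "[W]" r] this
    have "refines T0 \<I> R (seq W D) (seq W (seq V \<rho>))" by simp
    then obtain l where l: "0 \<le> l" "l \<le> 1" "seq W D = l *\<^sub>R \<rho>"
      using pure_stateD[OF P] WV(1) seq_id_left[OF \<rho>(1)] by (metis seq_assoc)
    have "D = seq V (seq W D)" using WV(2) seq_id_left[OF DT] by (simp add: seq_assoc)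
    also have "\<dots> = l *\<^sub>R seq V \<rho>" unfolding l(3) by (simp add: seq_rmul)
    finally show "\<exists>l. 0 \<le> l \<and> l \<le> 1 \<and> D = l *\<^sub>R seq V \<rho>" using l by blast
  qed
qed

lemma reversible_par_ident:
  assumes "reversible T0 R R' V" shows "reversible T0 (joint A R) (joint A R') (par (ident A) V)"
proof -
  obtain W where VT: "V \<in> Trans R R'" "seq (eff T0 R') V = eff T0 R" and WT: "W \<in> Trans R' R"
    "seq (eff T0 R) W = eff T0 R'" and WV: "seq W V = ident R" "seq V W = ident R'"
    using assms unfolding reversible_def channel_def by blast
  have ch: "channel T0 (joint A R) (joint A R') (par (ident A) V)"
           "channel T0 (joint A R') (joint A R) (par (ident A) W)"
    unfolding channel_def causal_par using par_T[OF id_T VT(1)] par_T[OF id_T WT(1)]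
      interchange[OF id_T eff_T VT(1) eff_T] interchange[OF id_T eff_T WT(1) eff_T] VT(2) WT(2)
      seq_id_right[OF eff_T] by auto
  have "seq (par (ident A) W) (par (ident A) V) = ident (joint A R)"
       "seq (par (ident A) V) (par (ident A) W) = ident (joint A R')"
    using interchange[OF id_T id_T VT(1) WT(1)] interchange[OF id_T id_T WT(1) VT(1)] WV par_id
      seq_id_left[OF id_T] by simp_all
  with ch show ?thesis unfolding reversible_def by blast
qed

lemma reversible_purification:
  assumes "purification T0 A R \<rho> \<Psi>" "reversible T0 R R' V"
  shows "purification T0 A R' \<rho> (seq (par (ident A) V) \<Psi>)"
proof -
  have VT: "V \<in> Trans R R'" "seq (eff T0 R') V = eff T0 R"
    using assms(2) unfolding reversible_def channel_def by auto
  have "marginal T0 A R' (seq (par (ident A) V) \<Psi>) = seq (par (seq (ident A) (ident A)) (seq (eff T0 R') V)) \<Psi>"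
    unfolding marginal_def seq_assoc using interchange[OF id_T id_T VT(1) eff_T] by simp
  also have "\<dots> = marginal T0 A R \<Psi>" unfolding marginal_def using VT seq_id_left[OF id_T] by simp
  finally show ?thesis
    using assms reversible_image_pure[OF _ _ reversible_par_ident[OF assms(2)]]
    unfolding purification_def by auto
qed

definition discriminates :: "'s \<Rightarrow> 't list \<Rightarrow> (nat \<Rightarrow> 't) \<Rightarrow> bool" where
  "discriminates C ts \<alpha> \<longleftrightarrow> ts \<in> tests C \<I> \<and>
     (\<forall>i < length ts. \<alpha> i \<in> normalized_states T0 C) \<and>
     (\<forall>i < length ts. \<forall>j < length ts. seq (ts ! j) (\<alpha> i) = (if i = j then one T0 else 0))"

lemma coarse_grained_product_test:
  assumes ts: "ts \<in> tests C \<I>" and ne: "ts \<noteq> []" and pair: "[a0, a1] \<in> tests C0 \<I>"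
  shows "map (\<lambda>x. par x a0) ts @ [par (eff T0 C) a1] \<in> tests (joint C C0) \<I>"
proof -
  have "concat (map (\<lambda>x. [par x a0, par x a1]) ts) \<in> tests (joint C C0) \<I>"
    using tests_par[OF ts pair] by simp
  moreover have "mset (concat (map (\<lambda>x. [par x a0, par x a1]) ts)) =
                 mset (map (\<lambda>x. par x a1) ts @ map (\<lambda>x. par x a0) ts)"
    by (induction ts) auto
  ultimately have "map (\<lambda>x. par x a1) ts @ map (\<lambda>x. par x a0) ts \<in> tests (joint C C0) \<I>"
    using tests_perm by metis
  then have "sum_list (map (\<lambda>x. par x a1) ts) # map (\<lambda>x. par x a0) ts \<in> tests (joint C C0) \<I>"
    using sum_prefix_test ne by simp
  moreover have "sum_list (map (\<lambda>x. par x a1) ts) = par (eff T0 C) a1"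
    using observation_test_sum[OF ts ne] by (simp add: par_lsum[symmetric])
  ultimately have "par (eff T0 C) a1 # map (\<lambda>x. par x a0) ts \<in> tests (joint C C0) \<I>" by simp
  then show "map (\<lambda>x. par x a0) ts @ [par (eff T0 C) a1] \<in> tests (joint C C0) \<I>"
    by (rule tests_perm) simp
qed

text \<open>Tensoring with a perfectly distinguishable pair \<open>\<rho>\<^sub>0, \<rho>\<^sub>1\<close> adds one state to a
  discriminated family: the states \<open>\<alpha> i \<otimes> \<rho>\<^sub>0\<close> and \<open>\<alpha> 0 \<otimes> \<rho>\<^sub>1\<close> are discriminated
  by the outcomes \<open>t\<^sub>j \<otimes> a\<^sub>0\<close> and \<open>e \<otimes> a\<^sub>1\<close>, a coarse-graining of the product test.\<close>

lemma discriminates_extend: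
  assumes disc: "discriminates C ts \<alpha>" and ne: "ts \<noteq> []"
    and pair: "\<rho>0 \<in> normalized_states T0 C0" "\<rho>1 \<in> normalized_states T0 C0" "[a0, a1] \<in> tests C0 \<I>"
      "seq a0 \<rho>0 = one T0" "seq a1 \<rho>1 = one T0" "seq a0 \<rho>1 = 0" "seq a1 \<rho>0 = 0"
  defines "n \<equiv> length ts"
  shows "discriminates (joint C C0) (map (\<lambda>x. par x a0) ts @ [par (eff T0 C) a1])
           (\<lambda>i. if i < n then par (\<alpha> i) \<rho>0 else par (\<alpha> 0) \<rho>1)"
proof -
  have ts: "ts \<in> tests C \<I>" "\<And>i. i < n \<Longrightarrow> \<alpha> i \<in> normalized_states T0 C"
    "\<And>i j. i < n \<Longrightarrow> j < n \<Longrightarrow> seq (ts!j) (\<alpha> i) = (if i = j then one T0 else 0)"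
    using disc unfolding discriminates_def n_def by auto
  have n: "0 < n" using ne unfolding n_def by simp
  define c where "c j = (if j < n then ts!j else eff T0 C)" for j
  define d where "d j = (if j < n then a0 else a1)" for j
  define \<beta> where "\<beta> i = (if i < n then \<alpha> i else \<alpha> 0)" for i
  define \<gamma> where "\<gamma> i = (if i < n then \<rho>0 else \<rho>1)" for i
  have c_T: "c j \<in> Trans C \<I>" and d_T: "d j \<in> Trans C0 \<I>" if "j < Suc n" for j
    using tests_T[OF ts(1)] tests_T[OF pair(3)] eff_T unfolding c_def d_def n_def by auto
  have \<beta>N: "\<beta> i \<in> normalized_states T0 C" and \<gamma>N: "\<gamma> i \<in> normalized_states T0 C0" for i
    using ts(2) n pair unfolding \<beta>_def \<gamma>_def by auto
  have outcome: "seq (par (c j) (d j)) (par (\<beta> i) (\<gamma> i)) = par (seq (c j) (\<beta> i)) (seq (d j) (\<gamma> i))"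
    if "j < Suc n" for i j
    using interchange[OF _ c_T[OF that] _ d_T[OF that]] normalized_statesD \<beta>N \<gamma>N by blast
  have test: "map (\<lambda>x. par x a0) ts @ [par (eff T0 C) a1] \<in> tests (joint C C0) \<I>"
    using coarse_grained_product_test[OF ts(1) ne pair(3)] .
  have nth_test: "(map (\<lambda>x. par x a0) ts @ [par (eff T0 C) a1]) ! j = par (c j) (d j)" if "j < Suc n" for j
    using that unfolding c_def d_def n_def by (auto simp: nth_append)
  have nth_state: "(if i < n then par (\<alpha> i) \<rho>0 else par (\<alpha> 0) \<rho>1) = par (\<beta> i) (\<gamma> i)" for i
    unfolding \<beta>_def \<gamma>_def by simp
  show ?thesis unfolding discriminates_def
  proof (intro conjI test allI impI)
    fix i assume "i < length (map (\<lambda>x. par x a0) ts @ [par (eff T0 C) a1])"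
    then show "(if i < n then par (\<alpha> i) \<rho>0 else par (\<alpha> 0) \<rho>1) \<in> normalized_states T0 (joint C C0)"
      unfolding nth_state using product_normalized \<beta>N \<gamma>N by blast
  next
    fix i j assume "i < length (map (\<lambda>x. par x a0) ts @ [par (eff T0 C) a1])"
      "j < length (map (\<lambda>x. par x a0) ts @ [par (eff T0 C) a1])"
    then have ij: "i < Suc n" "j < Suc n" unfolding n_def by auto
    show "seq ((map (\<lambda>x. par x a0) ts @ [par (eff T0 C) a1]) ! j) (if i < n then par (\<alpha> i) \<rho>0 else par (\<alpha> 0) \<rho>1)
          = (if i = j then one T0 else 0)"
      unfolding nth_test[OF ij(2)] nth_state outcome[OF ij(2)] using ij ts(3) n pair normalized_statesD[OF ts(2)[OF n]]
      by (cases "i < n"; cases "j < n") (auto simp: c_def d_def \<beta>_def \<gamma>_def par_one_right par_lzero par_rzero)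
  qed
qed

lemma discriminating_family_exists:
  "1 \<le> n \<Longrightarrow> \<exists>C ts \<alpha>. discriminates C ts \<alpha> \<and> length ts = n"
proof (induction n rule: nat_induct_at_least)
  case base
  obtain C0 \<rho>0 \<rho>1 a0 a1 where "\<rho>0 \<in> normalized_states T0 C0"
    using distinguishable by blast
  then have "discriminates C0 [eff T0 C0] (\<lambda>_. \<rho>0)"
    unfolding discriminates_def using eff_test normalized_statesD by auto
  then show ?case by fastforce
next
  case (Suc n)
  then obtain C ts \<alpha> where disc: "discriminates C ts \<alpha>" "length ts = n" by blast
  obtain C0 \<rho>0 \<rho>1 a0 a1 where "\<rho>0 \<in> normalized_states T0 C0" "\<rho>1 \<in> normalized_states T0 C0"
    "[a0, a1] \<in> tests C0 \<I>" "seq a0 \<rho>0 = one T0" "seq a1 \<rho>1 = one T0" "seq a0 \<rho>1 = 0" "seq a1 \<rho>0 = 0"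
    using distinguishable by blast
  from discriminates_extend[OF disc(1) _ this] disc Suc.hyps show ?case by fastforce
qed

lemma marginals_normalized:
  assumes "\<Psi> \<in> normalized_states T0 (joint A B)"
  shows "seq (par (ident A) (eff T0 B)) \<Psi> \<in> normalized_states T0 A"
    and "seq (par (eff T0 A) (ident B)) \<Psi> \<in> normalized_states T0 B"
proof -
  have \<Psi>: "\<Psi> \<in> Trans \<I> (joint A B)" "seq (par (eff T0 A) (eff T0 B)) \<Psi> = one T0"
    using normalized_statesD[OF assms] causal_par by auto
  have "par (ident A) (eff T0 B) \<in> Trans (joint A B) A" "par (eff T0 A) (ident B) \<in> Trans (joint A B) B"
    using par_T_joint[OF id_T eff_T] par_T_joint[OF eff_T id_T] by simp_all
  then show "seq (par (ident A) (eff T0 B)) \<Psi> \<in> normalized_states T0 A"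
    and "seq (par (eff T0 A) (ident B)) \<Psi> \<in> normalized_states T0 B"
    unfolding normalized_states_def states_def
    using seq_T[OF \<Psi>(1)] \<Psi>(2) par_effect_left[OF eff_T eff_T] par_effect_right[OF eff_T eff_T]
    by (simp_all add: seq_assoc)
qed

lemma purification_normalized: "purification T0 A B \<rho> \<Psi> \<Longrightarrow> \<rho> \<in> normalized_states T0 A"
  unfolding purification_def marginal_def using marginals_normalized(1) by blast

lemma purification_of_marginal:
  assumes \<Gamma>: "purification T0 (joint A C) D \<Sigma> \<Gamma>"
  shows "f \<in> Trans C \<I> \<Longrightarrow> seq (par (ident A) (par f (eff T0 D))) \<Gamma> = seq (par (ident A) f) \<Sigma>"
    and "purification T0 A (joint C D) (seq (par (ident A) (eff T0 C)) \<Sigma>) \<Gamma>"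
proof -
  show through_\<Sigma>: "seq (par (ident A) (par f (eff T0 D))) \<Gamma> = seq (par (ident A) f) \<Sigma>"
    if "f \<in> Trans C \<I>" for f
    using par_effects_split[OF that eff_T, of A] \<Gamma> unfolding purification_def marginal_def
    by (simp add: seq_assoc[symmetric])
  show "purification T0 A (joint C D) (seq (par (ident A) (eff T0 C)) \<Sigma>) \<Gamma>"
    using \<Gamma> through_\<Sigma>[OF eff_T] causal_par unfolding purification_def marginal_def by simp
qed

lemma purification_tensor_pure:
  assumes \<Gamma>: "purification T0 A X \<rho> \<Gamma>" and \<eta>: "\<eta> \<in> normalized_states T0 S" "pure_state T0 S \<eta>"
  shows "purification T0 A (joint X S) \<rho> (par \<Gamma> \<eta>)"
proof -
  have \<Gamma>N: "\<Gamma> \<in> normalized_states T0 (joint A X)" "pure_state T0 (joint A X) \<Gamma>"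
    "seq (par (ident A) (eff T0 X)) \<Gamma> = \<rho>"
    using \<Gamma> unfolding purification_def marginal_def by auto
  have "marginal T0 A (joint X S) (par \<Gamma> \<eta>) = seq (par (par (ident A) (eff T0 X)) (eff T0 S)) (par \<Gamma> \<eta>)"
    unfolding marginal_def causal_par[of X S] par_assoc ..
  also have "\<dots> = \<rho>"
  proof -
    have "par (ident A) (eff T0 X) \<in> Trans (joint A X) A" using par_T[OF id_T eff_T, of A X] by simp
    moreover have "\<Gamma> \<in> Trans \<I> (joint A X)" "\<eta> \<in> Trans \<I> S" "seq (eff T0 S) \<eta> = one T0"
      using normalized_statesD \<Gamma>N(1) \<eta>(1) by auto
    ultimately show ?thesis using interchange[OF _ _ _ eff_T] \<Gamma>N(3) by (simp add: par_one_right)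
  qed
  finally show ?thesis
    unfolding purification_def using product_normalized[OF \<Gamma>N(1) \<eta>(1)] product_pure[OF \<Gamma>N(1,2) \<eta>] by simp
qed

definition steers :: "'s \<Rightarrow> 's \<Rightarrow> 't \<Rightarrow> 't list \<Rightarrow> 't list \<Rightarrow> bool" where
  "steers A B \<Psi> b \<rho>s \<longleftrightarrow> b \<in> tests B \<I> \<and> length b = length \<rho>s \<and>
     (\<forall>i < length \<rho>s. \<rho>s ! i = seq (par (ident A) (b ! i)) \<Psi>)"

text \<open>The ensemble state \<open>\<Sigma> = \<Sum>\<^sub>i \<rho>\<^sub>i \<otimes> \<alpha>\<^sub>i\<close> attached to a preparation test and a
  discriminated family: it is a state (a coarse-graining of the test "prepare \<open>\<rho>\<^sub>i\<close>,
  then \<open>\<alpha>\<^sub>i\<close>"), its marginal on A is \<open>\<Sum>\<^sub>i \<rho>\<^sub>i\<close>, and the discriminating test steers it.\<close>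

lemma ensemble_state:
  assumes \<rho>s: "\<rho>s \<in> tests \<I> A" and disc: "discriminates C ts \<alpha>" and len: "length ts = length \<rho>s"
  defines "\<Sigma> \<equiv> sum_list (map (\<lambda>i. par (\<rho>s!i) (\<alpha> i)) [0..<length \<rho>s])"
  shows "\<Sigma> \<in> Trans \<I> (joint A C)" "seq (par (ident A) (eff T0 C)) \<Sigma> = sum_list \<rho>s"
    and "steers A C \<Sigma> ts \<rho>s"
proof -
  let ?n = "length \<rho>s"
  have \<alpha>: "\<alpha> i \<in> Trans \<I> C" "seq (eff T0 C) (\<alpha> i) = one T0" if "i < ?n" for i
    using disc that len normalized_statesD unfolding discriminates_def by auto
  have \<rho>T: "\<rho>s!i \<in> Trans \<I> A" if "i < ?n" for i using tests_T[OF \<rho>s] that by auto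
  have "\<forall>i \<in> {..<?n}. \<exists>r. \<alpha> i # r \<in> tests \<I> C" using test_starting_with \<alpha>(1) by blast
  then obtain r where "\<And>i. i < ?n \<Longrightarrow> \<alpha> i # r i \<in> tests \<I> C" by (metis bchoice lessThan_iff)
  then have "\<And>i. i < ?n \<Longrightarrow> par (ident A) (\<alpha> i) # map (par (ident A)) (r i) \<in> tests A (joint A C)"
    using tests_par_ident_left by fastforce
  from conditioned_choice[OF \<rho>s, of "\<lambda>i. par (ident A) (\<alpha> i)" "\<lambda>i. map (par (ident A)) (r i)"] this
  obtain zs where
    "map (\<lambda>i. seq (par (ident A) (\<alpha> i)) (\<rho>s!i)) [0..<?n] @ zs \<in> tests \<I> (joint A C)" by auto
  moreover have "map (\<lambda>i. seq (par (ident A) (\<alpha> i)) (\<rho>s!i)) [0..<?n] = map (\<lambda>i. par (\<rho>s!i) (\<alpha> i)) [0..<?n]"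
    using par_state_as_seq[OF \<rho>T \<alpha>(1)] by simp
  ultimately show "\<Sigma> \<in> Trans \<I> (joint A C)"
    unfolding \<Sigma>_def using sum_prefix_T preparation_test_nonempty[OF \<rho>s] by fastforce
  have on_effects: "seq (par (ident A) f) \<Sigma> = sum_list (map (\<lambda>i. par (\<rho>s!i) (seq f (\<alpha> i))) [0..<?n])"
    if f: "f \<in> Trans C \<I>" for f
    unfolding \<Sigma>_def seq_rsum map_map comp_def
    using interchange[OF \<rho>T id_T \<alpha>(1) f] seq_id_left[OF \<rho>T]
    by (intro arg_cong[where f=sum_list] map_cong) auto
  have "map (\<lambda>i. par (\<rho>s!i) (seq (eff T0 C) (\<alpha> i))) [0..<?n] = map (nth \<rho>s) [0..<?n]"
    using \<alpha>(2) by (simp add: par_one_right)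
  then show "seq (par (ident A) (eff T0 C)) \<Sigma> = sum_list \<rho>s"
    unfolding on_effects[OF eff_T] by (simp add: map_nth)
  have "seq (par (ident A) (ts!j)) \<Sigma> = \<rho>s!j" if j: "j < ?n" for j
  proof -
    have "ts!j \<in> Trans C \<I>"
      using tests_T[of ts C \<I>] nth_mem[of j ts] disc j len unfolding discriminates_def by auto
    moreover have "map (\<lambda>i. par (\<rho>s!i) (seq (ts!j) (\<alpha> i))) [0..<?n] =
                   map (\<lambda>i. if i = j then \<rho>s!i else 0) [0..<?n]"
      using disc j len unfolding discriminates_def by (auto simp: par_one_right par_rzero)
    ultimately show ?thesis using j on_effects by (simp add: sum_list_distinct_conv_sum_set)
  qed
  then show "steers A C \<Sigma> ts \<rho>s" using disc len unfolding steers_def discriminates_def by auto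
qed

text \<open>An observation test performed after a channel is again an observation test: by
  sequential composition it is part of a test whose remaining outcomes sum to 0
  (both the test and the kept part sum to the deterministic effect), so they can be
  coarse-grained away.\<close>

lemma observation_after_channel:
  assumes m: "channel T0 B R m" and t: "t \<in> tests R \<I>" "t \<noteq> []"
  shows "map (\<lambda>f. seq f m) t \<in> tests B \<I>"
proof -
  obtain r where "m # r \<in> tests B R" using m test_starting_with unfolding channel_def by blast
  from sequential_part[of "[m]" r B R t "[]" \<I>] this t(1)
  obtain zs where T: "map (\<lambda>f. seq f m) t @ zs \<in> tests B \<I>" by auto
  obtain g gs where g: "t = g # gs" using t(2) by (cases t) auto
  have "seq g m # zs @ map (\<lambda>f. seq f m) gs \<in> tests B \<I>"
    using T unfolding g by (rule tests_perm) simp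
  then have T': "(seq g m + sum_list zs) # map (\<lambda>f. seq f m) gs \<in> tests B \<I>"
    by (rule coarse_grain_prefix)
  have "eff T0 B = seq (sum_list t) m + sum_list zs"
    using observation_test_sum[OF T'] unfolding g by (simp add: seq_ladd seq_lsum ac_simps)
  also have "seq (sum_list t) m = eff T0 B"
    using observation_test_sum[OF t] m unfolding channel_def by simp
  finally have "sum_list zs = 0" by simp
  then show ?thesis using T' unfolding g by simp
qed

end

context opt_purif
begin

lemma discriminating_purification:
  assumes \<rho>s: "\<rho>s \<in> tests \<I> A" and \<rho>N: "sum_list \<rho>s \<in> normalized_states T0 A"
  shows "\<exists>X \<Gamma> b \<sigma>. purification T0 A X (sum_list \<rho>s) \<Gamma> \<and> steers A X \<Gamma> b \<rho>s \<and> discriminates X b \<sigma>"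
proof -
  have "1 \<le> length \<rho>s" using preparation_test_nonempty[OF \<rho>s] by (cases \<rho>s) auto
  then obtain C ts \<alpha> where disc: "discriminates C ts \<alpha>" and len: "length ts = length \<rho>s"
    using discriminating_family_exists by blast
  define \<Sigma> where "\<Sigma> = sum_list (map (\<lambda>i. par (\<rho>s!i) (\<alpha> i)) [0..<length \<rho>s])"
  note \<Sigma> = ensemble_state[OF \<rho>s disc len, folded \<Sigma>_def]
  have "seq (eff T0 (joint A C)) \<Sigma> = seq (eff T0 A) (seq (par (ident A) (eff T0 C)) \<Sigma>)"
    using par_effect_left[OF eff_T eff_T] causal_par by (simp add: seq_assoc)
  then have "\<Sigma> \<in> normalized_states T0 (joint A C)"
    using \<Sigma>(1,2) normalized_statesD[OF \<rho>N] unfolding normalized_states_def states_def by simp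
  then obtain D \<Gamma> where \<Gamma>: "purification T0 (joint A C) D \<Sigma> \<Gamma>" using purif_exists by blast
  note through_\<Sigma> = purification_of_marginal(1)[OF \<Gamma>]
  have pur: "purification T0 A (joint C D) (sum_list \<rho>s) \<Gamma>"
    using purification_of_marginal(2)[OF \<Gamma>] \<Sigma>(2) by simp
  define b where "b = map (\<lambda>a. par a (eff T0 D)) ts"
  have ts: "ts \<in> tests C \<I>" using disc unfolding discriminates_def by simp
  have "seq (par (ident A) (b!i)) \<Gamma> = seq (par (ident A) (ts!i)) \<Sigma>" if i: "i < length ts" for i
  proof -
    have "ts!i \<in> Trans C \<I>" using tests_T[OF ts] nth_mem[OF i] by blast
    then show ?thesis using through_\<Sigma> i unfolding b_def by simp
  qed
  then have steers: "steers A (joint C D) \<Gamma> b \<rho>s"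
    using \<Sigma>(3) tests_par_eff_right[OF ts] len unfolding steers_def b_def by auto
  define \<delta> where "\<delta> = seq (par (eff T0 (joint A C)) (ident D)) \<Gamma>"
  have "\<delta> \<in> normalized_states T0 D"
    unfolding \<delta>_def using marginals_normalized(2)[of \<Gamma> "joint A C" D] \<Gamma> unfolding purification_def by simp
  then have \<delta>: "\<delta> \<in> Trans \<I> D" "seq (eff T0 D) \<delta> = one T0" using normalized_statesD by blast+
  have "discriminates (joint C D) b (\<lambda>i. par (\<alpha> i) \<delta>)"
    unfolding discriminates_def
  proof (intro conjI allI impI)
    show "b \<in> tests (joint C D) \<I>" unfolding b_def using tests_par_eff_right[OF ts] .
    fix i assume i: "i < length b"
    then show "par (\<alpha> i) \<delta> \<in> normalized_states T0 (joint C D)"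
      using product_normalized disc \<delta> unfolding discriminates_def b_def normalized_states_def states_def
      by auto
    fix j assume j: "j < length b"
    have "\<alpha> i \<in> Trans \<I> C" "ts!j \<in> Trans C \<I>"
      using i j disc tests_T[OF ts] nth_mem[of j ts]
      unfolding discriminates_def b_def normalized_states_def states_def by auto
    then have "seq (b!j) (par (\<alpha> i) \<delta>) = par (seq (ts!j) (\<alpha> i)) (seq (eff T0 D) \<delta>)"
      using j interchange[OF _ _ \<delta>(1) eff_T] unfolding b_def by simp
    then show "seq (b!j) (par (\<alpha> i) \<delta>) = (if i = j then one T0 else 0)"
      using disc i j \<delta>(2) unfolding discriminates_def b_def by (simp add: par_one_right par_lzero)
  qed
  with pur steers show ?thesis by blast
qed

text \<open>The pure states
  \<open>\<Psi> \<otimes> \<Gamma>\<close> and \<open>\<Gamma> \<otimes> swap \<Psi>\<close> purify the same state, after a swap on the purifying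
  system of the former; uniqueness of purification relates them by a reversible U.\<close>

lemma purifications_transport:
  assumes \<Psi>: "purification T0 A B \<rho> \<Psi>" and \<Gamma>: "purification T0 A X \<rho> \<Gamma>"
  shows "\<exists>S \<eta> m. \<eta> \<in> normalized_states T0 S \<and> channel T0 B (joint X S) m \<and>
                 seq (par (ident A) m) \<Psi> = par \<Gamma> \<eta>"
proof -
  obtain sw where sw: "\<And>A B. reversible T0 (joint A B) (joint B A) (sw A B)" using swap by blast
  have \<Psi>N: "\<Psi> \<in> normalized_states T0 (joint A B)" "pure_state T0 (joint A B) \<Psi>"
    using \<Psi> unfolding purification_def by auto
  have \<Gamma>N: "\<Gamma> \<in> normalized_states T0 (joint A X)" "pure_state T0 (joint A X) \<Gamma>"
    using \<Gamma> unfolding purification_def by auto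
  have \<Psi>T: "\<Psi> \<in> Trans \<I> (joint A B)" and \<Gamma>T: "\<Gamma> \<in> Trans \<I> (joint A X)" "seq (eff T0 (joint A X)) \<Gamma> = one T0"
    using normalized_statesD \<Psi>N(1) \<Gamma>N(1) by auto
  define \<eta> where "\<eta> = seq (sw A B) \<Psi>"
  have \<eta>: "\<eta> \<in> normalized_states T0 (joint B A)" "pure_state T0 (joint B A) \<eta>"
    using reversible_image_pure[OF \<Psi>N(1,2) sw] unfolding \<eta>_def by auto
  define V where "V = sw (joint B A) X"
  have V: "reversible T0 (joint B (joint A X)) (joint X (joint B A)) V"
    using sw[of "joint B A" X] unfolding V_def by simp
  have P1: "purification T0 A (joint X (joint B A)) \<rho> (seq (par (ident A) V) (par \<Psi> \<Gamma>))"
    using reversible_purification[OF purification_tensor_pure[OF \<Psi> \<Gamma>N(1,2)] V] by simp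
  have P2: "purification T0 A (joint X (joint B A)) \<rho> (par \<Gamma> \<eta>)"
    using purification_tensor_pure[OF \<Gamma> \<eta>] .
  obtain U where U: "U \<in> revgroup T0 (joint X (joint B A))"
    "par \<Gamma> \<eta> = seq (par (ident A) U) (seq (par (ident A) V) (par \<Psi> \<Gamma>))"
    using purif_unique[OF P1 P2] by blast
  text \<open>The transporting channel: append \<open>\<Gamma>\<close>, swap, then apply U.\<close>
  define G where "G = par (ident B) \<Gamma>"
  define m where "m = seq U (seq V G)"
  have UT: "U \<in> Trans (joint X (joint B A)) (joint X (joint B A))"
    "seq (eff T0 (joint X (joint B A))) U = eff T0 (joint X (joint B A))"
    using U(1) unfolding revgroup_def reversible_def channel_def by auto
  have VT: "V \<in> Trans (joint B (joint A X)) (joint X (joint B A))"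
    "seq (eff T0 (joint X (joint B A))) V = eff T0 (joint B (joint A X))"
    using V unfolding reversible_def channel_def by auto
  have GT: "G \<in> Trans B (joint B (joint A X))" unfolding G_def using par_T_joint[OF id_T \<Gamma>T(1)] by simp
  have "seq (eff T0 (joint X (joint B A))) m = seq (eff T0 (joint B (joint A X))) G"
    unfolding m_def using UT VT by (simp add: seq_assoc)
  also have "\<dots> = eff T0 B"
    unfolding G_def causal_par using interchange[OF id_T eff_T \<Gamma>T(1) eff_T] \<Gamma>T(2) seq_id_right[OF eff_T]
    by (simp add: causal_par par_one_right)
  finally have "channel T0 B (joint X (joint B A)) m"
    unfolding channel_def m_def using seq_T[OF seq_T[OF GT VT(1)] UT(1)] by simp
  moreover have "seq (par (ident A) m) \<Psi> = par \<Gamma> \<eta>"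
  proof -
    have "seq (par (ident A) G) \<Psi> = par \<Psi> \<Gamma>"
      unfolding G_def par_assoc[symmetric] par_id using par_state_as_seq[OF \<Psi>T \<Gamma>T(1)] by simp
    moreover have "par (ident A) m = seq (par (ident A) U) (seq (par (ident A) V) (par (ident A) G))"
      unfolding m_def using par_ident_seq[OF GT VT(1)] par_ident_seq[OF seq_T[OF GT VT(1)] UT(1)] by simp
    ultimately show ?thesis using U(2) by (simp add: seq_assoc[symmetric])
  qed
  ultimately show ?thesis using \<eta>(1) by blast
qed

text \<open>Steering transfers between purifications: pull the steering test on \<open>\<Gamma>\<close> back
  along the transporting channel.\<close>

lemma steering_transfer:
  assumes \<Psi>: "purification T0 A B \<rho> \<Psi>" and \<Gamma>: "purification T0 A X \<rho> \<Gamma>"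
    and st: "steers A X \<Gamma> b \<rho>s" and ne: "\<rho>s \<noteq> []"
  shows "\<exists>b'. steers A B \<Psi> b' \<rho>s"
proof -
  obtain S \<eta> m where \<eta>: "\<eta> \<in> normalized_states T0 S" and m: "channel T0 B (joint X S) m"
    and m\<Psi>: "seq (par (ident A) m) \<Psi> = par \<Gamma> \<eta>"
    using purifications_transport[OF \<Psi> \<Gamma>] by blast
  have b: "b \<in> tests X \<I>" "length b = length \<rho>s" "\<And>i. i < length \<rho>s \<Longrightarrow> \<rho>s!i = seq (par (ident A) (b!i)) \<Gamma>"
    using st unfolding steers_def by auto
  define t where "t = map (\<lambda>h. par h (eff T0 S)) b"
  have "t \<noteq> []" using ne b(2) unfolding t_def by auto
  then have "map (\<lambda>f. seq f m) t \<in> tests B \<I>"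
    using observation_after_channel[OF m tests_par_eff_right[OF b(1)]] unfolding t_def by simp
  moreover have "\<rho>s!i = seq (par (ident A) (seq (t!i) m)) \<Psi>" if i: "i < length \<rho>s" for i
  proof -
    have h: "b!i \<in> Trans X \<I>" using tests_T[OF b(1)] nth_mem i b(2) by auto
    have \<Gamma>T: "\<Gamma> \<in> Trans \<I> (joint A X)" using \<Gamma> normalized_statesD unfolding purification_def by blast
    have tT: "t!i \<in> Trans (joint X S) \<I>" unfolding t_def using par_T_joint[OF h eff_T] i b(2) by simp
    have mT: "m \<in> Trans B (joint X S)" using m unfolding channel_def by blast
    have "seq (par (ident A) (seq (t!i) m)) \<Psi> = seq (par (par (ident A) (b!i)) (eff T0 S)) (par \<Gamma> \<eta>)"
      using par_ident_seq[OF mT tT] m\<Psi> i b(2) unfolding t_def by (simp add: seq_assoc[symmetric] par_assoc)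
    also have "\<dots> = seq (par (ident A) (b!i)) \<Gamma>"
    proof -
      have hA: "par (ident A) (b!i) \<in> Trans (joint A X) A" using par_T[OF id_T h, of A] by simp
      have "\<eta> \<in> Trans \<I> S" "seq (eff T0 S) \<eta> = one T0" using normalized_statesD[OF \<eta>] by auto
      then show ?thesis using interchange[OF \<Gamma>T hA _ eff_T] by (simp add: par_one_right)
    qed
    finally show ?thesis using b(3)[OF i] by simp
  qed
  ultimately have "steers A B \<Psi> (map (\<lambda>f. seq f m) t) \<rho>s"
    using b(2) unfolding steers_def by (auto simp: t_def)
  then show ?thesis ..
qed

end

theorem mainTheorem3:
  fixes T0 :: "('s, 't::real_normed_vector) opt_struct"
    and A B :: 's and \<rho>s :: "'t list" and \<Psi> :: 't
  assumes "opt_purif T0"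
    and "\<rho>s \<in> o_tests T0 (o_I T0) A"
    and "purification T0 A B (sum_list \<rho>s) \<Psi>"
  shows "(\<exists>b \<in> o_tests T0 B (o_I T0). length b = length \<rho>s \<and>
            (\<forall>i < length \<rho>s. \<rho>s ! i = o_seq T0 (o_par T0 (o_id T0 A) (b ! i)) \<Psi>))
       \<and> (\<exists>B' \<Psi>'. purification T0 A B' (sum_list \<rho>s) \<Psi>' \<and>
            (\<exists>b \<in> o_tests T0 B' (o_I T0). length b = length \<rho>s \<and>
               (\<forall>i < length \<rho>s. \<rho>s ! i = o_seq T0 (o_par T0 (o_id T0 A) (b ! i)) \<Psi>') \<and>
               (\<exists>\<sigma>. (\<forall>i < length \<rho>s. \<sigma> i \<in> normalized_states T0 B') \<and>
                  (\<forall>i < length \<rho>s. \<forall>j < length \<rho>s.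
                     o_seq T0 (b ! j) (\<sigma> i) = (if i = j then one T0 else 0)))))"
proof -
  interpret opt_purif T0 by fact
  obtain X \<Gamma> b \<sigma> where \<Gamma>: "purification T0 A X (sum_list \<rho>s) \<Gamma>" "steers A X \<Gamma> b \<rho>s"
    and disc: "discriminates X b \<sigma>"
    using discriminating_purification[OF assms(2) purification_normalized[OF assms(3)]] by blast
  obtain b' where "steers A B \<Psi> b' \<rho>s"
    using steering_transfer[OF assms(3) \<Gamma> preparation_test_nonempty[OF assms(2)]] by blast
  with \<Gamma> disc show ?thesis unfolding steers_def discriminates_def by metis
qed

end
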